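(* Let $(M,\omega,f)$ be a gradient shrinking Kähler–Ricci soliton with complex structure $J$, i.e. the Riemannian metric satisfies $\mathrm{Ric}+\mathrm{Hess}(f)=\frac g2$ (equivalently $R_{i\bar j}+f_{i\bar j}=\frac12\delta_{i\bar j}$, $f_{ij}=0$ in a unitary frame), with $f$ normalized so that $S+|\nabla f|^2=f$, $S$ the scalar curvature. Put $\rho=2\sqrt f$, $e_\rho=\nabla\rho/|\nabla\rho|$ and, for a real vector $X$, $X^{1,0}=X-\sqrt{-1}JX$. At a point where $\nabla\rho\neq0$, if $\mathrm{Ric}(e_\rho^{1,0},\overline{e_\rho^{1,0}})\geq\frac{S}{f}$, then $$\mathrm{Hess}(\log\rho)\big((\nabla\rho)^{1,0},\overline{(\nabla\rho)^{1,0}}\big)\leq0.$$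
   Context: Tensors ($\mathrm{Ric}$, Hessians) are extended complex-bilinearly to $TM\otimes\mathbb{C}$; thus $\mathrm{Ric}(e_\rho^{1,0},\overline{e_\rho^{1,0}})=\mathrm{Ric}(e_\rho,e_\rho)+\mathrm{Ric}(Je_\rho,Je_\rho)$. *)

theory Defs
  imports "HOL-Analysis.Analysis"
begin

text \<open>Local coordinate model: an open set U of a Euclidean space carrying a
  Riemannian metric g (g x u v = metric at x on coordinate vectors u, v),
  an almost complex structure J, and a potential f.\<close>

definition D :: "('a::real_normed_vector \<Rightarrow> 'b::real_normed_vector) \<Rightarrow> 'a \<Rightarrow> 'a \<Rightarrow> 'b" where
  "D h x u = frechet_derivative h (at x) u"

fun Ck_on :: "nat \<Rightarrow> 'a::real_normed_vector set \<Rightarrow> ('a \<Rightarrow> 'b::real_normed_vector) \<Rightarrow> bool" where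
  "Ck_on 0 U h = continuous_on U h"
| "Ck_on (Suc k) U h = (h differentiable_on U \<and> (\<forall>u. Ck_on k U (\<lambda>x. D h x u)))"

definition smooth_on :: "'a::real_normed_vector set \<Rightarrow> ('a \<Rightarrow> 'b::real_normed_vector) \<Rightarrow> bool" where
  "smooth_on U h = (\<forall>k. Ck_on k U h)"

definition riem_metric :: "'a::euclidean_space set \<Rightarrow> ('a \<Rightarrow> 'a \<Rightarrow> 'a \<Rightarrow> real) \<Rightarrow> bool" where
  "riem_metric U g =
     ((\<forall>x\<in>U. bilinear (g x) \<and> (\<forall>u v. g x u v = g x v u) \<and> (\<forall>u. u \<noteq> 0 \<longrightarrow> g x u u > 0))
      \<and> (\<forall>u v. smooth_on U (\<lambda>x. g x u v)))"

definition raise :: "('a::euclidean_space \<Rightarrow> 'a \<Rightarrow> 'a \<Rightarrow> real) \<Rightarrow> 'a \<Rightarrow> ('a \<Rightarrow> real) \<Rightarrow> 'a" where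
  "raise g x xi = (THE z. \<forall>w. g x z w = xi w)"

definition grad :: "('a::euclidean_space \<Rightarrow> 'a \<Rightarrow> 'a \<Rightarrow> real) \<Rightarrow> ('a \<Rightarrow> real) \<Rightarrow> 'a \<Rightarrow> 'a" where
  "grad g h x = raise g x (D h x)"

text \<open>Christoffel symbols of the Levi-Civita connection (Koszul formula):
  nabla_u v = Gam x u v for constant coordinate vector fields u, v.\<close>
definition Gam :: "('a::euclidean_space \<Rightarrow> 'a \<Rightarrow> 'a \<Rightarrow> real) \<Rightarrow> 'a \<Rightarrow> 'a \<Rightarrow> 'a \<Rightarrow> 'a" where
  "Gam g x u v = raise g x (\<lambda>w. (D (\<lambda>y. g y v w) x u + D (\<lambda>y. g y u w) x v
                                   - D (\<lambda>y. g y u v) x w) / 2)"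

definition Hess :: "('a::euclidean_space \<Rightarrow> 'a \<Rightarrow> 'a \<Rightarrow> real) \<Rightarrow> ('a \<Rightarrow> real) \<Rightarrow> 'a \<Rightarrow> 'a \<Rightarrow> 'a \<Rightarrow> real" where
  "Hess g h x u v = D (\<lambda>y. D h y v) x u - D h x (Gam g x u v)"

text \<open>Curvature R(u,v)w = nabla_u nabla_v w - nabla_v nabla_u w (coordinate fields commute).\<close>
definition Riem :: "('a::euclidean_space \<Rightarrow> 'a \<Rightarrow> 'a \<Rightarrow> real) \<Rightarrow> 'a \<Rightarrow> 'a \<Rightarrow> 'a \<Rightarrow> 'a \<Rightarrow> 'a" where
  "Riem g x u v w = D (\<lambda>y. Gam g y v w) x u - D (\<lambda>y. Gam g y u w) x v
                    + Gam g x u (Gam g x v w) - Gam g x v (Gam g x u w)"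

definition Ric :: "('a::euclidean_space \<Rightarrow> 'a \<Rightarrow> 'a \<Rightarrow> real) \<Rightarrow> 'a \<Rightarrow> 'a \<Rightarrow> 'a \<Rightarrow> real" where
  "Ric g x v w = (\<Sum>b\<in>Basis. Riem g x b v w \<bullet> b)"

definition scal :: "('a::euclidean_space \<Rightarrow> 'a \<Rightarrow> 'a \<Rightarrow> real) \<Rightarrow> 'a \<Rightarrow> real" where
  "scal g x = (\<Sum>b\<in>Basis. Ric g x (raise g x (\<lambda>w. b \<bullet> w)) b)"

text \<open>Kaehler structure: g is J-invariant, J^2 = -1, and J is parallel.\<close>
definition kaehler :: "'a::euclidean_space set \<Rightarrow> ('a \<Rightarrow> 'a \<Rightarrow> 'a \<Rightarrow> real) \<Rightarrow> ('a \<Rightarrow> 'a \<Rightarrow> 'a) \<Rightarrow> bool" where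
  "kaehler U g J =
     (riem_metric U g \<and> (\<forall>u. smooth_on U (\<lambda>x. J x u)) \<and>
      (\<forall>x\<in>U. linear (J x) \<and> (\<forall>u. J x (J x u) = - u) \<and>
              (\<forall>u v. g x (J x u) (J x v) = g x u v) \<and>
              (\<forall>u v. D (\<lambda>y. J y v) x u + Gam g x u (J x v) - J x (Gam g x u v) = 0)))"

definition shrinking_KRS :: "'a::euclidean_space set \<Rightarrow> ('a \<Rightarrow> 'a \<Rightarrow> 'a \<Rightarrow> real) \<Rightarrow> ('a \<Rightarrow> 'a \<Rightarrow> 'a) \<Rightarrow> ('a \<Rightarrow> real) \<Rightarrow> bool" where
  "shrinking_KRS U g J f =
     (open U \<and> kaehler U g J \<and> smooth_on U f \<and>
      (\<forall>x\<in>U. \<forall>u v. Ric g x u v + Hess g f x u v = g x u v / 2) \<and>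
      (\<forall>x\<in>U. scal g x + g x (grad g f x) (grad g f x) = f x))"

end

theory Submission
  imports Defs
begin

(* Write rho = 2 sqrt f and v = grad rho.  Since grad f = sqrt f * v, the normalisation
   S + |grad f|^2 = f becomes |v|^2 = 1 - S/f, and ln rho = ln 2 + (ln f)/2 gives
     Hess (ln rho) = Hess f / (2f) - df * df / (2f^2).
   For e = v/|v| the soliton equation Ric = g/2 - Hess f turns Ric(e,e) + Ric(Je,Je) into
   1 - (Hess f(v,v) + Hess f(Jv,Jv)) / |v|^2, so the curvature hypothesis says
   Hess f(v,v) + Hess f(Jv,Jv) <= |v|^4.  As Jv is orthogonal to v, df(Jv) = 0 while
   df(v) = sqrt f |v|^2, hence the Hessian of ln rho in question equals
   (Hess f(v,v) + Hess f(Jv,Jv) - |v|^4) / (2f) <= 0. *)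

lemma D_eqI: "(h has_derivative F) (at x) \<Longrightarrow> D h x = F"
  unfolding D_def using frechet_derivative_at by metis

lemma has_derivative_D: "h differentiable (at x) \<Longrightarrow> (h has_derivative D h x) (at x)"
  unfolding D_def using frechet_derivative_works by metis

lemma linear_D: "h differentiable (at x) \<Longrightarrow> linear (D h x)"
  using has_derivative_D has_derivative_linear by blast

lemma D_cong_open:
  assumes "open V" "x \<in> V" "\<And>y. y \<in> V \<Longrightarrow> h1 y = h2 y"
  shows "D h1 x = D h2 x"
proof -
  have "(h1 has_derivative F) (at x) \<longleftrightarrow> (h2 has_derivative F) (at x)" for F
    using has_derivative_transform_within_open[OF _ assms(1,2)] assms(3) by metis
  then show ?thesis unfolding D_def frechet_derivative_def by simp
qed

lemma D_add:
  "h1 differentiable (at x) \<Longrightarrow> h2 differentiable (at x) \<Longrightarrow>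
   D (\<lambda>y. h1 y + h2 y) x u = D h1 x u + D h2 x u"
  using D_eqI[OF has_derivative_add[OF has_derivative_D has_derivative_D]] by metis

lemma D_mult:
  fixes h1 h2 :: "'a::real_normed_vector \<Rightarrow> real"
  shows "h1 differentiable (at x) \<Longrightarrow> h2 differentiable (at x) \<Longrightarrow>
   D (\<lambda>y. h1 y * h2 y) x u = h1 x * D h2 x u + D h1 x u * h2 x"
  using D_eqI[OF has_derivative_mult[OF has_derivative_D has_derivative_D]] by metis

lemma D_cmult:
  fixes h :: "'a::real_normed_vector \<Rightarrow> real"
  shows "h differentiable (at x) \<Longrightarrow> D (\<lambda>y. c * h y) x u = c * D h x u"
  using D_eqI[OF has_derivative_mult_right[OF has_derivative_D]] by metis

lemma D_scaleR_direction: "h differentiable (at x) \<Longrightarrow> D h x (c *\<^sub>R u) = c *\<^sub>R D h x u"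
  using linear_D linear_scale by blast

lemma D_comp_real:
  fixes h :: "'a::real_normed_vector \<Rightarrow> real"
  assumes "h differentiable (at x)" "(\<phi> has_real_derivative \<phi>') (at (h x))"
  shows "D (\<lambda>y. \<phi> (h y)) x = (\<lambda>u. \<phi>' * D h x u)"
  using D_eqI[OF has_derivative_compose[OF has_derivative_D[OF assms(1)]
        has_field_derivative_imp_has_derivative[OF assms(2)]]] by simp

lemma differentiable_comp_real:
  fixes h :: "'a::real_normed_vector \<Rightarrow> real"
  assumes "h differentiable (at x)" "(\<phi> has_real_derivative \<phi>') (at (h x))"
  shows "(\<lambda>y. \<phi> (h y)) differentiable (at x)"
  using has_derivative_compose[OF has_derivative_D[OF assms(1)]
      has_field_derivative_imp_has_derivative[OF assms(2)]] differentiableI by blast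

lemma smooth_on_differentiable:
  "smooth_on U h \<Longrightarrow> open U \<Longrightarrow> x \<in> U \<Longrightarrow> h differentiable (at x)"
  unfolding smooth_on_def by (metis Ck_on.simps(2) differentiable_on_eq_differentiable_at)

lemma smooth_on_continuous: "smooth_on U h \<Longrightarrow> continuous_on U h"
  unfolding smooth_on_def by (metis Ck_on.simps(1))

lemma smooth_on_D: "smooth_on U h \<Longrightarrow> smooth_on U (\<lambda>x. D h x u)"
  unfolding smooth_on_def by (metis Ck_on.simps(2))

lemma linear_functional_eq_inner:
  fixes \<xi> :: "'a::euclidean_space \<Rightarrow> real"
  assumes "linear \<xi>"
  shows "\<xi> w = (\<Sum>b\<in>Basis. \<xi> b *\<^sub>R b) \<bullet> w"
proof -
  have "\<xi> w = \<xi> (\<Sum>b\<in>Basis. (w \<bullet> b) *\<^sub>R b)" by (simp add: euclidean_representation)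
  also have "\<dots> = (\<Sum>b\<in>Basis. \<xi> b *\<^sub>R b) \<bullet> w"
    using assms
    by (simp add: linear_sum linear_scale inner_sum_left inner_sum_right inner_commute mult.commute)
  finally show ?thesis .
qed

lemma bilinear_pos_def_represents:
  fixes B :: "'a::euclidean_space \<Rightarrow> 'a \<Rightarrow> real"
  assumes bil: "bilinear B" and pos: "\<And>u. u \<noteq> 0 \<Longrightarrow> B u u > 0" and lin: "linear \<xi>"
  shows "\<exists>z. \<forall>w. B z w = \<xi> w"
proof -
  define L where "L z = (\<Sum>b\<in>Basis. B z b *\<^sub>R b)" for z
  have B_eq: "B z w = L z \<bullet> w" for z w
    unfolding L_def using bil bilinear_def linear_functional_eq_inner by blast
  have "linear L"
    unfolding L_def
    by (rule linearI)
      (simp_all add: bil bilinear_ladd bilinear_lmul sum.distrib scaleR_sum_right scaleR_add_left)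
  moreover have "inj L"
  proof (rule linear_injective_0[THEN iffD2, OF \<open>linear L\<close>], intro allI impI)
    fix z assume "L z = 0"
    then show "z = 0" using pos B_eq by force
  qed
  ultimately obtain z where "L z = (\<Sum>b\<in>Basis. \<xi> b *\<^sub>R b)"
    by (metis eucl.linear_inj_imp_surj surjD)
  then show ?thesis using B_eq linear_functional_eq_inner[OF lin] by metis
qed

lemma riem_metricD:
  assumes "riem_metric U g" "x \<in> U"
  shows "bilinear (g x)" "g x u v = g x v u" "u \<noteq> 0 \<Longrightarrow> g x u u > 0"
  using assms unfolding riem_metric_def by auto

lemma metric_differentiable:
  "riem_metric U g \<Longrightarrow> open U \<Longrightarrow> x \<in> U \<Longrightarrow> (\<lambda>y. g y u v) differentiable (at x)"
  unfolding riem_metric_def using smooth_on_differentiable by blast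

lemma raise_eqI:
  assumes "riem_metric U g" "x \<in> U" "\<And>w. g x z w = \<xi> w"
  shows "raise g x \<xi> = z"
  unfolding raise_def
proof (rule the_equality)
  fix z' assume "\<forall>w. g x z' w = \<xi> w"
  then have "g x (z' - z) (z' - z) = 0"
    using assms by (simp add: bilinear_lsub[OF riem_metricD(1)[OF assms(1,2)]])
  then show "z' = z" using riem_metricD(3)[OF assms(1,2), of "z' - z"] by force
qed (use assms in simp)

lemma raise_works:
  assumes "riem_metric U g" "x \<in> U" "linear \<xi>"
  shows "g x (raise g x \<xi>) w = \<xi> w"
proof -
  obtain z where "\<forall>w. g x z w = \<xi> w"
    using bilinear_pos_def_represents riem_metricD[OF assms(1,2)] assms(3) by metis
  then show ?thesis using raise_eqI[OF assms(1,2)] by metis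
qed

lemma grad_eqI:
  "riem_metric U g \<Longrightarrow> x \<in> U \<Longrightarrow> (\<And>w. g x z w = D h x w) \<Longrightarrow> grad g h x = z"
  unfolding grad_def by (rule raise_eqI)

lemma grad_works:
  "riem_metric U g \<Longrightarrow> x \<in> U \<Longrightarrow> h differentiable (at x) \<Longrightarrow> g x (grad g h x) w = D h x w"
  unfolding grad_def using raise_works linear_D by blast

lemma linear_D_metric:
  assumes "riem_metric U g" "open U" "x \<in> U"
  shows "linear (\<lambda>w. D (\<lambda>y. g y v w) x u)"
proof (rule linearI)
  have bil: "\<And>y. y \<in> U \<Longrightarrow> bilinear (g y)" using assms(1) riem_metricD(1) by blast
  note diff = metric_differentiable[OF assms]
  fix w1 w2 :: 'a and c :: real
  have "D (\<lambda>y. g y v (w1 + w2)) x = D (\<lambda>y. g y v w1 + g y v w2) x"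
    by (rule D_cong_open[OF assms(2,3)]) (simp add: bil bilinear_radd)
  then show "D (\<lambda>y. g y v (w1 + w2)) x u = D (\<lambda>y. g y v w1) x u + D (\<lambda>y. g y v w2) x u"
    using D_add[OF diff diff] by simp
  have "D (\<lambda>y. g y v (c *\<^sub>R w1)) x = D (\<lambda>y. c * g y v w1) x"
    by (rule D_cong_open[OF assms(2,3)]) (simp add: bil bilinear_rmul)
  then show "D (\<lambda>y. g y v (c *\<^sub>R w1)) x u = c *\<^sub>R D (\<lambda>y. g y v w1) x u"
    using D_cmult[OF diff] by simp
qed

lemma Gam_koszul:
  assumes "riem_metric U g" "open U" "x \<in> U"
  shows "g x (Gam g x u v) w =
    (D (\<lambda>y. g y v w) x u + D (\<lambda>y. g y u w) x v - D (\<lambda>y. g y u v) x w) / 2"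
proof -
  have l1: "linear (\<lambda>w. D (\<lambda>y. g y v w) x u)" and l2: "linear (\<lambda>w. D (\<lambda>y. g y u w) x v)"
    and l3: "linear (D (\<lambda>y. g y u v) x)"
    using linear_D_metric[OF assms] linear_D[OF metric_differentiable[OF assms]] by blast+
  have "linear (\<lambda>w. (D (\<lambda>y. g y v w) x u + D (\<lambda>y. g y u w) x v - D (\<lambda>y. g y u v) x w) / 2)"
    by (intro linearI)
      (simp_all add: linear_add[OF l1] linear_add[OF l2] linear_add[OF l3]
        linear_scale[OF l1] linear_scale[OF l2] linear_scale[OF l3] field_simps)
  then show ?thesis unfolding Gam_def by (rule raise_works[OF assms(1,3)])
qed

lemma D_metric_scaleR:
  assumes "riem_metric U g" "open U" "x \<in> U"
  shows "D (\<lambda>y. g y (c *\<^sub>R u) (d *\<^sub>R v)) x w = c * d * D (\<lambda>y. g y u v) x w"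
proof -
  have "D (\<lambda>y. g y (c *\<^sub>R u) (d *\<^sub>R v)) x = D (\<lambda>y. (c * d) * g y u v) x"
    by (intro D_cong_open[OF assms(2,3)])
      (simp add: bilinear_lmul bilinear_rmul riem_metricD(1)[OF assms(1)])
  then show ?thesis using D_cmult[OF metric_differentiable[OF assms]] by simp
qed

lemma Gam_scaleR:
  assumes "riem_metric U g" "open U" "x \<in> U"
  shows "Gam g x (c *\<^sub>R u) (d *\<^sub>R v) = (c * d) *\<^sub>R Gam g x u v"
  unfolding Gam_def[of g x "c *\<^sub>R u"]
proof (rule raise_eqI[OF assms(1,3)])
  note diff = metric_differentiable[OF assms]
  fix w
  show "g x ((c * d) *\<^sub>R Gam g x u v) w =
    (D (\<lambda>y. g y (d *\<^sub>R v) w) x (c *\<^sub>R u) + D (\<lambda>y. g y (c *\<^sub>R u) w) x (d *\<^sub>R v)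
      - D (\<lambda>y. g y (c *\<^sub>R u) (d *\<^sub>R v)) x w) / 2"
    using D_metric_scaleR[OF assms, where d = 1, simplified]
    by (simp add: Gam_koszul[OF assms] bilinear_lmul[OF riem_metricD(1)[OF assms(1,3)]]
        D_scaleR_direction[OF diff] D_metric_scaleR[OF assms] field_simps)
qed

lemma Hess_scaleR:
  fixes f :: "'a::euclidean_space \<Rightarrow> real"
  assumes "riem_metric U g" "open U" "x \<in> U" "smooth_on U f"
  shows "Hess g f x (c *\<^sub>R u) (d *\<^sub>R v) = c * d * Hess g f x u v"
proof -
  have Df: "f differentiable (at y)" if "y \<in> U" for y
    using smooth_on_differentiable[OF assms(4,2) that] .
  have Dfv: "(\<lambda>y. D f y v) differentiable (at x)"
    using smooth_on_differentiable[OF smooth_on_D[OF assms(4)] assms(2,3)] .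
  have "D (\<lambda>y. D f y (d *\<^sub>R v)) x = D (\<lambda>y. d * D f y v) x"
    by (rule D_cong_open[OF assms(2,3)]) (simp add: D_scaleR_direction[OF Df])
  then show ?thesis
    unfolding Hess_def Gam_scaleR[OF assms(1-3)]
    by (simp add: D_cmult[OF Dfv] D_scaleR_direction[OF Dfv] D_scaleR_direction[OF Df[OF assms(3)]]
        algebra_simps)
qed

lemma Hess_comp:
  fixes f :: "'a::euclidean_space \<Rightarrow> real"
  assumes "open U" "x \<in> U" "smooth_on U f"
    and "open T" "f x \<in> T" "\<And>t. t \<in> T \<Longrightarrow> (\<phi> has_real_derivative \<phi>' t) (at t)"
    and "(\<phi>' has_real_derivative \<phi>'') (at (f x))"
  shows "Hess g (\<lambda>y. \<phi> (f y)) x u w = \<phi>' (f x) * Hess g f x u w + \<phi>'' * D f x u * D f x w"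
proof -
  define V where "V = U \<inter> f -` T"
  have "open V"
    unfolding V_def using continuous_open_preimage smooth_on_continuous assms(1,3,4) by blast
  have "x \<in> V" unfolding V_def using assms(2,5) by simp
  have Df: "f differentiable (at y)" if "y \<in> U" for y
    using smooth_on_differentiable[OF assms(3,1) that] .
  have D_\<phi>f: "D (\<lambda>y. \<phi> (f y)) y = (\<lambda>z. \<phi>' (f y) * D f y z)" if "y \<in> V" for y
    using that D_comp_real[OF Df assms(6)] unfolding V_def by simp
  have "D (\<lambda>y. D (\<lambda>y. \<phi> (f y)) y w) x = D (\<lambda>y. \<phi>' (f y) * D f y w) x"
    by (rule D_cong_open[OF \<open>open V\<close> \<open>x \<in> V\<close>]) (simp add: D_\<phi>f)
  also have "\<dots> = (\<lambda>u. \<phi>' (f x) * D (\<lambda>y. D f y w) x u + \<phi>'' * D f x u * D f x w)"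
  proof (rule ext)
    fix u
    have "(\<lambda>y. \<phi>' (f y)) differentiable (at x)"
      using differentiable_comp_real[OF Df[OF assms(2)] assms(7)] .
    moreover have "(\<lambda>y. D f y w) differentiable (at x)"
      using smooth_on_differentiable[OF smooth_on_D[OF assms(3)] assms(1,2)] .
    ultimately show "D (\<lambda>y. \<phi>' (f y) * D f y w) x u
        = \<phi>' (f x) * D (\<lambda>y. D f y w) x u + \<phi>'' * D f x u * D f x w"
      by (simp add: D_mult D_comp_real[OF Df[OF assms(2)] assms(7)])
  qed
  finally show ?thesis unfolding Hess_def D_\<phi>f[OF \<open>x \<in> V\<close>] by (simp add: algebra_simps)
qed

lemma kaehler_riem_metric: "kaehler U g J \<Longrightarrow> riem_metric U g"
  unfolding kaehler_def by blast

lemma kaehlerD: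
  assumes "kaehler U g J" "x \<in> U"
  shows "linear (J x)" "g x (J x u) (J x u) = g x u u" "g x u (J x u) = 0"
proof -
  show "linear (J x)" "g x (J x u) (J x u) = g x u u"
    using assms unfolding kaehler_def by auto
  note rm = kaehler_riem_metric[OF assms(1)]
  have "g x (J x u) (J x (J x u)) = g x u (J x u)"
    using assms unfolding kaehler_def by blast
  then have "- g x (J x u) u = g x u (J x u)"
    using assms unfolding kaehler_def
    by (simp add: bilinear_rneg[OF riem_metricD(1)[OF rm assms(2)]])
  then show "g x u (J x u) = 0"
    using riem_metricD(2)[OF rm assms(2), of "J x u" u] by linarith
qed

lemma shrinking_KRS_riem_metric: "shrinking_KRS U g J f \<Longrightarrow> riem_metric U g"
  unfolding shrinking_KRS_def using kaehler_riem_metric by blast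

lemma shrinking_KRS_D_potential:
  assumes sol: "shrinking_KRS U g J f" and "x \<in> U" "f x > 0"
  shows "D f x w = sqrt (f x) * g x (grad g (\<lambda>y. 2 * sqrt (f y)) x) w"
proof -
  have rm: "riem_metric U g" and Df: "f differentiable (at x)"
    using shrinking_KRS_riem_metric[OF sol] sol assms(2) smooth_on_differentiable
    unfolding shrinking_KRS_def by blast+
  have sqrt_deriv: "((\<lambda>t. 2 * sqrt t) has_real_derivative 1 / sqrt (f x)) (at (f x))"
    using assms(3) by (auto intro!: derivative_eq_intros simp: field_simps)
  have "g x (grad g (\<lambda>y. 2 * sqrt (f y)) x) w = D f x w / sqrt (f x)"
    using grad_works[OF rm assms(2) differentiable_comp_real[OF Df sqrt_deriv]]
    by (simp add: D_comp_real[OF Df sqrt_deriv])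
  then show ?thesis using assms(3) by simp
qed

lemma shrinking_KRS_norm_grad_rho:
  assumes sol: "shrinking_KRS U g J f" and "x \<in> U" "f x > 0"
    and v: "v = grad g (\<lambda>y. 2 * sqrt (f y)) x"
  shows "g x v v = 1 - scal g x / f x"
proof -
  note rm = shrinking_KRS_riem_metric[OF sol]
  note bil = riem_metricD(1)[OF rm assms(2)]
  have "grad g f x = sqrt (f x) *\<^sub>R v"
    by (rule grad_eqI[OF rm assms(2)])
      (simp add: bilinear_lmul[OF bil] shrinking_KRS_D_potential[OF assms(1-3)] v)
  moreover have "scal g x + g x (grad g f x) (grad g f x) = f x"
    using sol assms(2) unfolding shrinking_KRS_def by blast
  moreover have "g x (sqrt (f x) *\<^sub>R v) (sqrt (f x) *\<^sub>R v) = sqrt (f x) * sqrt (f x) * g x v v"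
    by (simp add: bilinear_lmul[OF bil] bilinear_rmul[OF bil])
  ultimately have "scal g x + f x * g x v v = f x"
    using assms(3) by simp
  then show ?thesis using assms(3) by (simp add: field_simps)
qed

lemma shrinking_KRS_Ric_complex_line:
  assumes sol: "shrinking_KRS U g J f" and "x \<in> U" "v \<noteq> 0"
    and e: "e = (1 / sqrt (g x v v)) *\<^sub>R v"
  shows "Ric g x e e + Ric g x (J x e) (J x e)
    = 1 - (Hess g f x v v + Hess g f x (J x v) (J x v)) / g x v v"
proof -
  have "open U" "kaehler U g J" "smooth_on U f"
    and soliton: "\<And>u w. Ric g x u w + Hess g f x u w = g x u w / 2"
    using sol assms(2) unfolding shrinking_KRS_def by auto
  note rm = kaehler_riem_metric[OF \<open>kaehler U g J\<close>]
  note bil = riem_metricD(1)[OF rm assms(2)]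
  define c where "c = 1 / sqrt (g x v v)"
  have "g x v v > 0" using riem_metricD(3)[OF rm assms(2) assms(3)] .
  then have cc: "c * c = 1 / g x v v" unfolding c_def by (simp add: real_sqrt_mult[symmetric])
  have Ric_scaled: "Ric g x (c *\<^sub>R u) (c *\<^sub>R u) = c * c * (g x u u / 2 - Hess g f x u u)" for u
    using soliton[of "c *\<^sub>R u" "c *\<^sub>R u"] Hess_scaleR[OF rm \<open>open U\<close> assms(2) \<open>smooth_on U f\<close>]
    by (simp add: bilinear_lmul[OF bil] bilinear_rmul[OF bil] algebra_simps)
  have "J x e = c *\<^sub>R J x v"
    unfolding e c_def using kaehlerD(1)[OF \<open>kaehler U g J\<close> assms(2)] by (simp add: linear_scale)
  then show ?thesis
    using \<open>g x v v > 0\<close>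
    by (simp add: e c_def[symmetric] Ric_scaled kaehlerD(2)[OF \<open>kaehler U g J\<close> assms(2)] cc
        field_simps)
qed

lemma shrinking_KRS_Hess_ln_rho:
  assumes sol: "shrinking_KRS U g J f" and "x \<in> U" "f x > 0"
  shows "Hess g (\<lambda>y. ln (2 * sqrt (f y))) x u w
    = Hess g f x u w / (2 * f x) - D f x u * D f x w / (2 * (f x)\<^sup>2)"
proof -
  have "open U" "smooth_on U f" using sol unfolding shrinking_KRS_def by auto
  have "Hess g (\<lambda>y. ln (2 * sqrt (f y))) x u w
    = 1 / (2 * f x) * Hess g f x u w + (- 1 / (2 * (f x)\<^sup>2)) * D f x u * D f x w"
    by (rule Hess_comp[OF \<open>open U\<close> assms(2) \<open>smooth_on U f\<close>, where T = "{0<..}"])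
      (use assms(3) in \<open>auto intro!: derivative_eq_intros simp: field_simps power2_eq_square\<close>)
  then show ?thesis by simp
qed

theorem mainTheorem12:
  fixes U :: "'a::euclidean_space set"
    and g :: "'a \<Rightarrow> 'a \<Rightarrow> 'a \<Rightarrow> real"
    and J :: "'a \<Rightarrow> 'a \<Rightarrow> 'a"
    and f :: "'a \<Rightarrow> real"
    and x :: 'a
  assumes sol: "shrinking_KRS U g J f"
    and xU: "x \<in> U"
    and fpos: "f x > 0"
    and grad_nz: "grad g (\<lambda>y. 2 * sqrt (f y)) x \<noteq> 0"
    and ric: "(let v = grad g (\<lambda>y. 2 * sqrt (f y)) x;
                  e = (1 / sqrt (g x v v)) *\<^sub>R v
              in Ric g x e e + Ric g x (J x e) (J x e)) \<ge> scal g x / f x"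
  shows "(let v = grad g (\<lambda>y. 2 * sqrt (f y)) x
          in Hess g (\<lambda>y. ln (2 * sqrt (f y))) x v v
             + Hess g (\<lambda>y. ln (2 * sqrt (f y))) x (J x v) (J x v)) \<le> 0"
proof -
  define v where "v = grad g (\<lambda>y. 2 * sqrt (f y)) x"
  define N where "N = g x v v"
  define H where "H = Hess g f x v v + Hess g f x (J x v) (J x v)"
  have kae: "kaehler U g J" using sol unfolding shrinking_KRS_def by blast
  have "N > 0"
    using riem_metricD(3)[OF shrinking_KRS_riem_metric[OF sol] xU] grad_nz
    unfolding N_def v_def by blast
  have "1 - N \<le> 1 - H / N"
    using ric shrinking_KRS_Ric_complex_line[OF sol xU grad_nz refl]
      shrinking_KRS_norm_grad_rho[OF sol xU fpos refl]
    unfolding Let_def N_def H_def v_def by simp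
  then have "H \<le> N\<^sup>2"
    using \<open>N > 0\<close> by (simp add: field_simps power2_eq_square)
  have "D f x v = sqrt (f x) * N" "D f x (J x v) = 0"
    unfolding shrinking_KRS_D_potential[OF sol xU fpos] v_def[symmetric] N_def
    by (simp_all add: kaehlerD(3)[OF kae xU])
  then have "Hess g (\<lambda>y. ln (2 * sqrt (f y))) x v v
      + Hess g (\<lambda>y. ln (2 * sqrt (f y))) x (J x v) (J x v) = (H - N\<^sup>2) / (2 * f x)"
    unfolding shrinking_KRS_Hess_ln_rho[OF sol xU fpos] H_def
    using fpos by (simp add: field_simps power2_eq_square)
  with \<open>H \<le> N\<^sup>2\<close> show ?thesis
    using fpos unfolding Let_def v_def[symmetric] by (simp add: divide_nonpos_pos)
qed

end
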